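(* Let $n,x$ be integers with $1<x<n$, so that $G=C_{2n}(x,1,n)$ is a $5$-regular circulant graph. If $n\equiv x\equiv 1 \pmod 3$, then $G$ is word-representable.
   Context: Two distinct letters $x,y$ alternate in a word $w$ if, after deleting all other letters from $w$, the resulting word is of the form $xyxy\cdots$ or $yxyx\cdots$ (of even or odd length). A graph $G=(V,E)$ is word-representable if there is a word $w$ over the alphabet $V$, containing every letter of $V$ at least once, such that for all distinct $x,y\in V$, $xy\in E$ if and only if $x$ and $y$ alternate in $w$. For an integer $m$ and a set $R$ of positive integers each at most $m/2$, the circulant graph $C_m(R)$ has vertex set $\{0,1,\dots,m-1\}$, with $i$ and $j$ adjacent iff $\min(|i-j|,\,m-|i-j|)\in R$. $C_{2n}(x,1,n)$ denotes the circulant graph on $2n$ vertices with jump set $\{1,x,n\}$; it is $5$-regular exactly when $1<x<n$. *)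

theory Defs
  imports Main
begin

definition alternate :: "'a list \<Rightarrow> 'a \<Rightarrow> 'a \<Rightarrow> bool" where
  "alternate w x y \<longleftrightarrow>
     (let u = filter (\<lambda>c. c = x \<or> c = y) w in
        (\<forall>i < length u. u ! i = (if even i then x else y)) \<or>
        (\<forall>i < length u. u ! i = (if even i then y else x)))"

definition word_representable :: "'a set \<Rightarrow> ('a \<Rightarrow> 'a \<Rightarrow> bool) \<Rightarrow> bool" where
  "word_representable V E \<longleftrightarrow>
     (\<exists>w. set w = V \<and>
          (\<forall>x\<in>V. \<forall>y\<in>V. x \<noteq> y \<longrightarrow> (E x y \<longleftrightarrow> alternate w x y)))"

definition circ_dist :: "nat \<Rightarrow> nat \<Rightarrow> nat \<Rightarrow> nat" where
  "circ_dist m i j = min (if i \<le> j then j - i else i - j) (m - (if i \<le> j then j - i else i - j))"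

definition circulant_adj :: "nat \<Rightarrow> nat set \<Rightarrow> nat \<Rightarrow> nat \<Rightarrow> bool" where
  "circulant_adj m R i j \<longleftrightarrow> i < m \<and> j < m \<and> circ_dist m i j \<in> R"

end

theory Submission
  imports Defs
begin

text \<open>Colouring vertex \<open>i\<close> by \<open>i mod 3\<close> is proper, since every jump \<open>1, x, n\<close> and every
  complementary distance \<open>2n - 1, 2n - x, n\<close> is \<open>1 mod 3\<close>. Every 3-colourable graph is
  word-representable: concatenate, over all ordered pairs \<open>(u, v)\<close> of vertices, a block in
  which every vertex occurs twice, built from colour-class segments in the order
  \<open>0 1 2 0 1 2\<close>, so that vertices \<open>p, q\<close> of colours \<open>i < j\<close> always appear as \<open>p q p q\<close>.
  If \<open>u, v\<close> are non-adjacent, the block for \<open>(u, v)\<close> rearranges the segments around \<open>u\<close>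
  and \<open>v\<close> so that they appear as \<open>v u u v\<close>, \<open>u v v u\<close> or \<open>u u v v\<close>, which destroys
  their alternation in the whole word.\<close>

lemma alternate_commute: "alternate w x y \<longleftrightarrow> alternate w y x"
proof -
  have "(\<lambda>c. c = x \<or> c = y) = (\<lambda>c. c = y \<or> c = x)" by auto
  then show ?thesis unfolding alternate_def Let_def by simp blast
qed

lemma nth_concat_replicate_pair:
  "i < 2 * m \<Longrightarrow> concat (replicate m [x, y]) ! i = (if even i then x else y)"
proof (induction m arbitrary: i)
  case (Suc m)
  then show ?case by (cases i) (auto simp: nth_Cons')
qed simp

lemma length_concat_replicate_pair: "length (concat (replicate m [x, y])) = 2 * m"
  by (simp add: length_concat sum_list_replicate)

lemma alternate_if_projection_periodic:
  assumes "filter (\<lambda>c. c = x \<or> c = y) w = concat (replicate m [x, y, x, y])"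
  shows "alternate w x y"
proof -
  have "concat (replicate m [x, y, x, y]) = concat (replicate (2 * m) [x, y])"
    by (induction m) auto
  then show ?thesis
    unfolding alternate_def Let_def assms
    by (simp add: nth_concat_replicate_pair length_concat_replicate_pair)
qed

lemma not_alternate_if_projection_repeats:
  assumes "x \<noteq> y" and "filter (\<lambda>c. c = x \<or> c = y) w = pre @ a # a # post"
  shows "\<not> alternate w x y"
proof
  assume "alternate w x y"
  then obtain z z' where "{z, z'} = {x, y}"
    and alt: "\<forall>i < length (pre @ a # a # post). (pre @ a # a # post) ! i = (if even i then z else z')"
    unfolding alternate_def Let_def assms(2) by blast
  then have "z \<noteq> z'" using assms(1) by auto
  have "(pre @ a # a # post) ! length pre = a" "(pre @ a # a # post) ! Suc (length pre) = a"
    by (simp_all add: nth_append)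
  then show False
    using alt[rule_format, of "length pre"] alt[rule_format, of "Suc (length pre)"] \<open>z \<noteq> z'\<close>
    by (auto split: if_splits)
qed

definition segments :: "'a list \<Rightarrow> ('a \<Rightarrow> bool) list \<Rightarrow> 'a list" where
  "segments L Ps = concat (map (\<lambda>P. filter P L) Ps)"

lemma filter_eq_singleton_if_distinct:
  "distinct L \<Longrightarrow> p \<in> set L \<Longrightarrow> filter (\<lambda>c. c = p) L = [p]"
  by (induction L) (auto simp: filter_empty_conv)

lemma filter_pair_segments:
  assumes "distinct L" "p \<in> set L" "q \<in> set L" "\<forall>P \<in> set Ps. \<not> (P p \<and> P q)"
  shows "filter (\<lambda>c. c = p \<or> c = q) (segments L Ps)
       = concat (map (\<lambda>P. if P p then [p] else if P q then [q] else []) Ps)"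
  using assms(4)
proof (induction Ps)
  case (Cons P Ps)
  have "filter (\<lambda>c. c = p \<or> c = q) (filter P L) = (if P p then [p] else if P q then [q] else [])"
  proof -
    have "filter (\<lambda>c. P c \<and> (c = p \<or> c = q)) L
        = filter (\<lambda>c. c = (if P p then p else q)) L" if "P p \<or> P q"
      using Cons.prems that by (intro filter_cong) auto
    then show ?thesis
      using filter_eq_singleton_if_distinct[OF assms(1)] assms(2,3)
      by (auto simp: filter_empty_conv)
  qed
  with Cons show ?case by (simp add: segments_def)
qed (simp add: segments_def)

abbreviation (input) colour_class :: "('a \<Rightarrow> nat) \<Rightarrow> nat \<Rightarrow> 'a \<Rightarrow> bool" where
  "colour_class col k \<equiv> \<lambda>c. col c = k"

definition standard_block :: "('a \<Rightarrow> nat) \<Rightarrow> ('a \<Rightarrow> bool) list" where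
  "standard_block col = map (colour_class col) [0, 1, 2, 0, 1, 2]"

definition same_colour_block :: "('a \<Rightarrow> nat) \<Rightarrow> 'a \<Rightarrow> ('a \<Rightarrow> bool) list" where
  "same_colour_block col u =
     concat (map (\<lambda>k. [\<lambda>c. c = u \<and> col c = k, \<lambda>c. col c = k \<and> c \<noteq> u]) [0, 1, 2]) @
     concat (map (\<lambda>k. [\<lambda>c. col c = k \<and> c \<noteq> u, \<lambda>c. c = u \<and> col c = k]) [0, 1, 2])"

definition block_01 :: "('a \<Rightarrow> nat) \<Rightarrow> 'a \<Rightarrow> 'a \<Rightarrow> ('a \<Rightarrow> bool) list" where
  "block_01 col u v =
     [\<lambda>c. col c = 0 \<and> c \<noteq> u, \<lambda>c. c = v, \<lambda>c. c = u, \<lambda>c. col c = 1 \<and> c \<noteq> v,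
      colour_class col 2, colour_class col 0, colour_class col 1, colour_class col 2]"

definition block_12 :: "('a \<Rightarrow> nat) \<Rightarrow> 'a \<Rightarrow> 'a \<Rightarrow> ('a \<Rightarrow> bool) list" where
  "block_12 col u v =
     [colour_class col 0, colour_class col 1, colour_class col 2, colour_class col 0,
      \<lambda>c. col c = 1 \<and> c \<noteq> u, \<lambda>c. c = v, \<lambda>c. c = u, \<lambda>c. col c = 2 \<and> c \<noteq> v]"

definition block_02 :: "('a \<Rightarrow> nat) \<Rightarrow> 'a \<Rightarrow> 'a \<Rightarrow> ('a \<Rightarrow> bool) list" where
  "block_02 col u v =
     [colour_class col 0, colour_class col 1, \<lambda>c. col c = 2 \<and> c \<noteq> v, \<lambda>c. c = u,
      \<lambda>c. c = v, \<lambda>c. col c = 0 \<and> c \<noteq> u, colour_class col 1, colour_class col 2]"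

definition block :: "('a \<Rightarrow> nat) \<Rightarrow> ('a \<Rightarrow> 'a \<Rightarrow> bool) \<Rightarrow> 'a \<Rightarrow> 'a \<Rightarrow> ('a \<Rightarrow> bool) list" where
  "block col E u v =
     (if u = v \<or> E u v then standard_block col
      else if col u = col v then same_colour_block col u
      else if col u = 0 \<and> col v = 1 then block_01 col u v
      else if col u = 1 \<and> col v = 2 then block_12 col u v
      else if col u = 0 \<and> col v = 2 then block_02 col u v
      else standard_block col)"

lemmas block_defs =
  block_def standard_block_def same_colour_block_def block_01_def block_12_def block_02_def

lemma filter_pair_block_edge:
  assumes "distinct L" "p \<in> set L" "q \<in> set L" "col p < col q" "col q < 3" "E p q" "E q p"
  shows "filter (\<lambda>c. c = p \<or> c = q) (segments L (block col E u v)) = [p, q, p, q]"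
proof -
  have "\<forall>P \<in> set (block col E u v). \<not> (P p \<and> P q)"
    using assms(4) unfolding block_defs by auto
  then have "filter (\<lambda>c. c = p \<or> c = q) (segments L (block col E u v))
      = concat (map (\<lambda>P. if P p then [p] else if P q then [q] else []) (block col E u v))"
    by (rule filter_pair_segments[OF assms(1-3)])
  also have "\<dots> = [p, q, p, q]"
  proof -
    have "col p = 0 \<and> col q = 1 \<or> col p = 0 \<and> col q = 2 \<or> col p = 1 \<and> col q = 2"
      using assms(4,5) by auto
    then show ?thesis
      using assms(6,7) unfolding block_defs by (elim disjE) (auto split: if_splits)
  qed
  finally show ?thesis .
qed

lemma filter_pair_block_non_edge:
  assumes "distinct L" "p \<in> set L" "q \<in> set L" "p \<noteq> q" "col p \<le> col q" "col q < 3"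
    and "\<not> E p q"
  obtains pre a post
  where "filter (\<lambda>c. c = p \<or> c = q) (segments L (block col E p q)) = pre @ a # a # post"
proof -
  have "\<forall>P \<in> set (block col E p q). \<not> (P p \<and> P q)"
    using assms(4,7) unfolding block_defs by auto
  then have "filter (\<lambda>c. c = p \<or> c = q) (segments L (block col E p q))
      = concat (map (\<lambda>P. if P p then [p] else if P q then [q] else []) (block col E p q))"
    by (rule filter_pair_segments[OF assms(1-3)])
  also have "\<dots> \<in> {[q, p, p, q], [p, q, q, p], [p, p, q, q]}"
    using assms(4-7) unfolding block_defs by (auto split: if_splits)
  finally show ?thesis
    using that[of "[q]"] that[of "[p]"] that[of "[]"] by auto
qed

definition colouring_word :: "('a \<Rightarrow> nat) \<Rightarrow> ('a \<Rightarrow> 'a \<Rightarrow> bool) \<Rightarrow> 'a list \<Rightarrow> 'a list" where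
  "colouring_word col E L =
     concat (map (\<lambda>(u, v). segments L (block col E u v)) (List.product L L))"

lemma set_colouring_word:
  assumes "\<forall>x \<in> set L. col x < 3"
  shows "set (colouring_word col E L) = set L"
proof
  show "set (colouring_word col E L) \<subseteq> set L"
    unfolding colouring_word_def segments_def by auto
  show "set L \<subseteq> set (colouring_word col E L)"
  proof
    fix z assume "z \<in> set L"
    then have "z \<in> set (segments L (block col E z z))"
      using assms unfolding segments_def block_defs by force
    with \<open>z \<in> set L\<close> show "z \<in> set (colouring_word col E L)"
      unfolding colouring_word_def by force
  qed
qed

lemma filter_colouring_word:
  "filter F (colouring_word col E L)
     = concat (map (\<lambda>(u, v). filter F (segments L (block col E u v))) (List.product L L))"
  unfolding colouring_word_def filter_concat map_map
  by (intro arg_cong[where f = concat] map_cong) auto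

theorem word_representable_if_3_colourable:
  fixes V :: "'a set" and E :: "'a \<Rightarrow> 'a \<Rightarrow> bool" and col :: "'a \<Rightarrow> nat"
  assumes "finite V" and colours: "\<And>x. x \<in> V \<Longrightarrow> col x < 3"
    and proper: "\<And>x y. x \<in> V \<Longrightarrow> y \<in> V \<Longrightarrow> E x y \<Longrightarrow> col x \<noteq> col y"
    and sym: "\<And>x y. x \<in> V \<Longrightarrow> y \<in> V \<Longrightarrow> E x y \<Longrightarrow> E y x"
  shows "word_representable V E"
proof -
  obtain L where L: "distinct L" "set L = V"
    using finite_distinct_list[OF \<open>finite V\<close>] by blast
  define w where "w = colouring_word col E L"
  let ?pair = "\<lambda>p q c. c = p \<or> c = q"
  let ?block_pair = "\<lambda>p q (u, v). filter (?pair p q) (segments L (block col E u v))"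
  have edge: "alternate w p q" if "p \<in> V" "q \<in> V" "E p q" "col p < col q" for p q
  proof -
    have "map (?block_pair p q) (List.product L L) = map (\<lambda>_. [p, q, p, q]) (List.product L L)"
      using filter_pair_block_edge[OF L(1)] that colours sym L(2) by (intro map_cong) auto
    then show ?thesis
      by (intro alternate_if_projection_periodic)
        (simp add: w_def filter_colouring_word map_replicate_const)
  qed
  have non_edge: "\<not> alternate w p q"
    if pq: "p \<in> V" "q \<in> V" "p \<noteq> q" "\<not> E p q" "col p \<le> col q" for p q
  proof -
    have "(p, q) \<in> set (List.product L L)" using pq(1,2) L(2) by simp
    then obtain xs ys where "List.product L L = xs @ (p, q) # ys" by (meson split_list)
    moreover obtain pre a post where "?block_pair p q (p, q) = pre @ a # a # post"
      by (rule filter_pair_block_non_edge[OF L(1), of p q col E]) (use pq colours L(2) in auto)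
    ultimately have "filter (?pair p q) w
        = (concat (map (?block_pair p q) xs) @ pre) @ a # a #
          post @ concat (map (?block_pair p q) ys)"
      by (simp add: w_def filter_colouring_word)
    then show ?thesis by (rule not_alternate_if_projection_repeats[OF \<open>p \<noteq> q\<close>])
  qed
  have ordered: "E p q \<longleftrightarrow> alternate w p q"
    if "p \<in> V" "q \<in> V" "p \<noteq> q" "col p \<le> col q" for p q
  proof
    assume "E p q"
    moreover from this have "col p < col q" using proper that by force
    ultimately show "alternate w p q" using edge that by blast
  next
    assume "alternate w p q"
    then show "E p q" using non_edge that by blast
  qed
  have represents: "E p q \<longleftrightarrow> alternate w p q" if "p \<in> V" "q \<in> V" "p \<noteq> q" for p q
  proof (cases "col p \<le> col q")
    case False
    then have "E q p \<longleftrightarrow> alternate w q p" using ordered that by simp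
    moreover have "E q p \<longleftrightarrow> E p q" using sym that by blast
    ultimately show ?thesis using alternate_commute[of w p q] by simp
  qed (use ordered that in simp)
  have "set w = V"
    unfolding w_def using colours L(2) by (simp add: set_colouring_word)
  with represents show ?thesis
    unfolding word_representable_def by (intro exI[of _ w]) simp
qed

lemma circ_dist_commute: "circ_dist m i j = circ_dist m j i"
  unfolding circ_dist_def by auto

lemma circulant_adj_commute: "circulant_adj m R i j \<Longrightarrow> circulant_adj m R j i"
  unfolding circulant_adj_def by (simp add: circ_dist_commute)

lemma circulant_adj_mod_neq:
  fixes k m :: nat
  assumes jumps: "\<And>r. r \<in> R \<Longrightarrow> \<not> k dvd r \<and> \<not> k dvd (m - r)"
    and "circulant_adj m R i j"
  shows "i mod k \<noteq> j mod k"
proof -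
  have ordered: "i mod k \<noteq> j mod k" if "i \<le> j" "j < m" "circ_dist m i j \<in> R" for i j
  proof -
    have "circ_dist m i j = min (j - i) (m - (j - i))"
      using \<open>i \<le> j\<close> unfolding circ_dist_def by simp
    then have "\<not> k dvd (j - i)"
      using jumps[OF \<open>circ_dist m i j \<in> R\<close>] \<open>j < m\<close> by (cases "j - i \<le> m - (j - i)") auto
    then have "j mod k \<noteq> i mod k" by (simp add: mod_eq_dvd_iff_nat[OF \<open>i \<le> j\<close>])
    then show ?thesis by simp
  qed
  from assms(2) show ?thesis
    unfolding circulant_adj_def
    using ordered[of i j] ordered[of j i] circ_dist_commute[of m i j] by (cases "i \<le> j") auto
qed

theorem corollary1:
  fixes n x :: nat
  assumes "1 < x" and "x < n"
    and "n mod 3 = 1" and "x mod 3 = 1"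
  shows "word_representable {0..<2*n} (circulant_adj (2*n) {1, x, n})"
proof (rule word_representable_if_3_colourable[where col = "\<lambda>i. i mod 3"])
  have "\<not> 3 dvd r \<and> \<not> 3 dvd (2 * n - r)" if "r \<in> {1, x, n}" for r :: nat
  proof -
    have "r mod 3 = 1" "r \<le> n" using that assms by auto
    then show ?thesis using \<open>n mod 3 = 1\<close> by presburger
  qed
  then show "i mod 3 \<noteq> j mod 3" if "circulant_adj (2 * n) {1, x, n} i j" for i j
    using circulant_adj_mod_neq that by blast
qed (auto intro: circulant_adj_commute)

end
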